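(* Let $\gamma\ge 2$ be an integer, $\delta>0$, and let $\mu$ range over an arbitrary parameter set. Let $F(\rho,\mu)$ be complex valued with $F(\cdot,\mu)\in C^{\gamma+1}([0,\delta))$ for each $\mu$, and set $a_j(\mu)=\partial_\rho^jF(0,\mu)/j!$. Assume (F1) $a_0(\mu)=a_1(\mu)=0$ for all $\mu$; (F2) there is $C>0$ with $\sum_{j=2}^{\gamma}|a_j(\mu)|\ge C$ for all $\mu$; (F3) for each $\mu$, $|\partial_\rho F(\rho,\mu)|$ is increasing in $\rho$ for $0<\rho<\delta$; (F4) for each $k\le\gamma+1$, $\partial_\rho^kF(\rho,\mu)$ is bounded uniformly in $0<\rho<\delta$ and $\mu$. Then, provided $\delta$ is sufficiently small (depending only on $\gamma$ and the constants in (F2), (F4)), there exist constants $C>0$ and $C_m>0$ such that for all $0<\rho<\delta$, all $\mu$, and all integers $1\le m\le\gamma+1$, $$|\partial_\rho F(\rho,\mu)|\ge C\rho^{\gamma-1}\qquad\text{and}\qquad |\partial_\rho^mF(\rho,\mu)|\le C_m\rho^{1-m}|\partial_\rho F(\rho,\mu)|.$$ *)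

theory Defs
  imports "HOL-Analysis.Analysis"
begin

definition C_derivs :: "nat \<Rightarrow> (real \<Rightarrow> complex) \<Rightarrow> (nat \<Rightarrow> real \<Rightarrow> complex) \<Rightarrow> real set \<Rightarrow> bool" where
  "C_derivs n f Df S \<longleftrightarrow>
     (\<forall>x\<in>S. Df 0 x = f x) \<and>
     (\<forall>k<n. \<forall>x\<in>S. (Df k has_vector_derivative Df (Suc k) x) (at x within S)) \<and>
     continuous_on S (Df n)"

end

theory Submission
  imports Defs "HOL-Computational_Algebra.Polynomial"
begin

(*
  Write D k for the k-th derivative of F(., mu) and set gamma = n + 1.  Taylor's theorem with the
  uniform bound M on D (gamma + 1) says that on (0, delta) every D k agrees with its Taylor
  polynomial at 0 up to an error M * rho ^ (gamma + 1 - k).  The key quantity is the "Taylor mass"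
    S(rho) = sum_{i <= n} |D (i+1) 0| / i! * rho ^ i,
  the l1-norm of the coefficients of the Taylor polynomial of D 1, rescaled to [0, rho].
   - From below, (F2) gives S(rho) >= C0 * rho ^ n.
   - From above, evaluating the rescaled Taylor polynomial at the n + 1 nodes rho * (l+1)/(n+1)
     and using that coefficients of a polynomial of degree n are controlled by its values at
     n + 1 fixed distinct points (Lagrange interpolation), together with the monotonicity (F3),
     gives S(rho) <= A * (|D 1 rho| + M * rho ^ gamma).
  For delta small the remainder term is absorbed, which yields |D 1 rho| >= C * rho ^ (gamma-1);
  the same Taylor expansion bounds rho ^ (m-1) * |D m rho| by S(rho) + M * rho ^ gamma, hence by a
  multiple of |D 1 rho|.
*)

section \<open>Coefficients of a polynomial are controlled by its values at distinct nodes\<close>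

definition lagrange_basis :: "(nat \<Rightarrow> 'a::field) \<Rightarrow> nat \<Rightarrow> nat \<Rightarrow> 'a poly" where
  "lagrange_basis z n l = (\<Prod>j\<in>{..n}-{l}. smult (1 / (z l - z j)) [:- z j, 1:])"

lemma poly_lagrange_basis:
  assumes "inj_on z {..n}" and "k \<le> n" and "l \<le> n"
  shows "poly (lagrange_basis z n l) (z k) = (if k = l then 1 else 0)"
proof (cases "k = l")
  case True
  have "z l \<noteq> z j" if "j \<in> {..n}-{l}" for j
    using assms that True by (auto dest: inj_onD)
  then show ?thesis
    using True by (simp add: lagrange_basis_def poly_prod diff_divide_distrib[symmetric])
next
  case False
  then show ?thesis
    using assms by (simp add: lagrange_basis_def poly_prod) (auto intro!: prod_zero bexI[of _ k])
qed

lemma degree_lagrange_basis: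
  assumes "l \<le> n"
  shows "degree (lagrange_basis z n l) \<le> n"
proof -
  have "degree (lagrange_basis z n l)
      \<le> (\<Sum>j\<in>{..n}-{l}. degree (smult (1 / (z l - z j)) [:- z j, 1:]))"
    unfolding lagrange_basis_def
    using degree_prod_sum_le[of "{..n}-{l}" "\<lambda>j. smult (1 / (z l - z j)) [:- z j, 1:]"]
    by (simp add: o_def)
  also have "\<dots> \<le> (\<Sum>j\<in>{..n}-{l}. 1)" by (intro sum_mono) auto
  also have "\<dots> = n" using assms by simp
  finally show ?thesis .
qed

lemma lagrange_interpolation:
  assumes "inj_on z {..n}" and "degree P \<le> n"
  shows "P = (\<Sum>l\<le>n. smult (poly P (z l)) (lagrange_basis z n l))" (is "P = ?Q")
proof (rule poly_eqI_degree[where A = "z ` {..n}"])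
  show "poly P x = poly ?Q x" if "x \<in> z ` {..n}" for x
  proof -
    obtain k where k: "k \<le> n" "x = z k" using \<open>x \<in> z ` {..n}\<close> by auto
    have "poly ?Q (z k) = (\<Sum>l\<le>n. poly P (z l) * (if k = l then 1 else 0))"
      using assms(1) k(1) by (auto simp: poly_sum poly_lagrange_basis intro!: sum.cong)
    also have "\<dots> = poly P (z k)" using k(1) by (simp add: if_distrib cong: if_cong)
    finally show ?thesis using k(2) by simp
  qed
  show "degree P < card (z ` {..n})" using assms by (simp add: card_image)
  have "degree ?Q \<le> n"
    by (intro degree_sum_le) (auto intro: order.trans[OF degree_smult_le] degree_lagrange_basis)
  then show "degree ?Q < card (z ` {..n})" using assms(1) by (simp add: card_image)
qed

text \<open>Finite-dimensional norm equivalence in explicit form: if a polynomial of degree at most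
  \<open>n\<close> is bounded by \<open>B\<close> at \<open>n + 1\<close> distinct nodes, the \<open>\<ell>\<^sup>1\<close>-norm of its coefficients is at
  most \<open>A * B\<close>, with \<open>A\<close> depending only on the nodes.\<close>
lemma coefficients_bounded_by_node_values:
  fixes z :: "nat \<Rightarrow> 'a::real_normed_field"
  assumes inj: "inj_on z {..n}"
  shows "\<exists>A>0. \<forall>c B. (\<forall>l\<le>n. norm (\<Sum>i\<le>n. c i * z l ^ i) \<le> B) \<longrightarrow> (\<Sum>i\<le>n. norm (c i)) \<le> A * B"
proof -
  define A where "A = (\<Sum>i\<le>n. \<Sum>l\<le>n. norm (coeff (lagrange_basis z n l) i))"
  have "(\<Sum>i\<le>n. norm (c i)) \<le> (A + 1) * B"
    if node_bound: "\<forall>l\<le>n. norm (\<Sum>i\<le>n. c i * z l ^ i) \<le> B" for c B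
  proof -
    define P where "P = (\<Sum>i\<le>n. monom (c i) i)"
    have poly_P: "norm (poly P (z l)) \<le> B" if "l \<le> n" for l
      using node_bound that by (simp add: P_def poly_sum poly_monom)
    have "degree P \<le> n"
      unfolding P_def by (intro degree_sum_le) (auto intro: order.trans[OF degree_monom_le])
    then have P_interp: "P = (\<Sum>l\<le>n. smult (poly P (z l)) (lagrange_basis z n l))"
      by (rule lagrange_interpolation[OF inj])
    have "norm (c i) \<le> B * (\<Sum>l\<le>n. norm (coeff (lagrange_basis z n l) i))" if "i \<le> n" for i
    proof -
      have "c i = coeff P i" using that by (simp add: P_def coeff_sum)
      also have "\<dots> = (\<Sum>l\<le>n. poly P (z l) * coeff (lagrange_basis z n l) i)"
        by (subst P_interp) (simp add: coeff_sum)
      finally have "norm (c i) \<le> (\<Sum>l\<le>n. norm (poly P (z l)) * norm (coeff (lagrange_basis z n l) i))"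
        by (simp add: norm_mult[symmetric] norm_sum)
      also have "\<dots> \<le> (\<Sum>l\<le>n. B * norm (coeff (lagrange_basis z n l) i))"
        using poly_P by (intro sum_mono mult_right_mono) auto
      finally show ?thesis by (simp add: sum_distrib_left)
    qed
    then have "(\<Sum>i\<le>n. norm (c i)) \<le> B * A"
      unfolding A_def sum_distrib_left by (intro sum_mono) auto
    moreover have "B \<ge> 0" using poly_P[of 0] norm_ge_zero order_trans by blast
    ultimately show ?thesis by (simp add: algebra_simps)
  qed
  moreover have "A \<ge> 0" unfolding A_def by (intro sum_nonneg) auto
  ultimately show ?thesis by (intro exI[of _ "A + 1"]) auto
qed

definition interpolation_node :: "nat \<Rightarrow> nat \<Rightarrow> complex" where
  "interpolation_node n l = complex_of_real (real (Suc l) / real (Suc n))"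

lemma inj_on_interpolation_node: "inj_on (interpolation_node n) {..n}"
  by (intro inj_onI)
    (simp add: interpolation_node_def divide_cancel_right del: of_real_divide of_real_of_nat_eq)

section \<open>Taylor expansion with a bounded top derivative\<close>

lemma taylor_polynomial_has_vector_derivative:
  fixes c :: "nat \<Rightarrow> 'a::real_normed_vector"
  shows "((\<lambda>t. \<Sum>j<Suc n. (t ^ j / fact j) *\<^sub>R c j) has_vector_derivative
           (\<Sum>j<n. (t ^ j / fact j) *\<^sub>R c (Suc j))) (at t within S)"
proof (induction n)
  case 0
  then show ?case by (simp add: has_vector_derivative_const)
next
  case (Suc n)
  have "real (Suc n) * t ^ n / fact (Suc n) = t ^ n / fact n"
    by (simp add: fact_Suc del: of_nat_Suc)
  then have "((\<lambda>t. t ^ Suc n / fact (Suc n)) has_real_derivative t ^ n / fact n) (at t within S)"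
    using DERIV_cdivide[OF DERIV_pow[of "Suc n" t S], of "fact (Suc n)"] by simp
  then have "((\<lambda>t. (t ^ Suc n / fact (Suc n)) *\<^sub>R c (Suc n)) has_vector_derivative
      (t ^ n / fact n) *\<^sub>R c (Suc n)) (at t within S)"
    using has_vector_derivative_scaleR[OF _ has_vector_derivative_const[of "c (Suc n)"]] by simp
  from has_vector_derivative_add[OF Suc this] show ?case
    by (simp add: add.commute)
qed

lemma norm_le_by_derivative_bound:
  fixes g g' :: "real \<Rightarrow> 'a::real_inner"
  assumes "0 < \<rho>" and "\<rho> < \<delta>" and "g 0 = 0"
    and der: "\<And>x. x \<in> {0..<\<delta>} \<Longrightarrow> (g has_vector_derivative g' x) (at x within {0..<\<delta>})"
    and bnd: "\<And>x. x \<in> {0<..<\<rho>} \<Longrightarrow> norm (g' x) \<le> B"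
  shows "norm (g \<rho>) \<le> \<rho> * B"
proof -
  have "\<exists>x\<in>{0<..<\<rho>}. norm (g \<rho> - g 0) \<le> norm ((\<lambda>h. h *\<^sub>R g' x) (\<rho> - 0))"
  proof (rule mvt_general)
    show "continuous_on {0..\<rho>} g"
      using assms(2) by (intro continuous_on_subset[OF continuous_on_vector_derivative[OF der]]) auto
    fix x assume "0 < x" "x < \<rho>"
    then have x: "x \<in> {0<..<\<delta>}" using assms(2) by auto
    have "(g has_vector_derivative g' x) (at x within {0<..<\<delta>})"
      using x by (intro has_vector_derivative_within_subset[OF der]) auto
    then show "(g has_derivative (\<lambda>h. h *\<^sub>R g' x)) (at x)"
      by (simp add: at_within_open[OF x] has_vector_derivative_def)
  qed (use assms(1) in auto)
  then obtain x where "x \<in> {0<..<\<rho>}" "norm (g \<rho>) \<le> \<rho> * norm (g' x)"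
    using assms(1,3) by auto
  with bnd[of x] assms(1) show ?thesis
    by (meson mult_left_mono less_imp_le order_trans)
qed

lemma taylor_remainder_bound:
  fixes D :: "nat \<Rightarrow> real \<Rightarrow> complex"
  assumes C: "C_derivs N f D {0..<\<delta>}"
    and bnd: "\<And>t. t \<in> {0<..<\<delta>} \<Longrightarrow> norm (D N t) \<le> M" and "M \<ge> 0"
    and "k \<le> N" and "\<rho> \<in> {0<..<\<delta>}"
  shows "norm (D k \<rho> - (\<Sum>j<N-k. (\<rho> ^ j / fact j) *\<^sub>R D (k + j) 0)) \<le> M * \<rho> ^ (N - k)"
  using assms(4,5)
proof (induction "N - k" arbitrary: k \<rho>)
  case 0
  then show ?case using bnd by simp
next
  case (Suc i)
  then have k: "k < N" "N - Suc k = i" by auto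
  define g where "g t = D k t - (\<Sum>j<Suc i. (t ^ j / fact j) *\<^sub>R D (k + j) 0)" for t
  define g' where "g' t = D (Suc k) t - (\<Sum>j<i. (t ^ j / fact j) *\<^sub>R D (Suc k + j) 0)" for t
  have "(g has_vector_derivative g' x) (at x within {0..<\<delta>})" if "x \<in> {0..<\<delta>}" for x
  proof -
    have "(D k has_vector_derivative D (Suc k) x) (at x within {0..<\<delta>})"
      using C k(1) that unfolding C_derivs_def by blast
    from has_vector_derivative_diff[OF this
        taylor_polynomial_has_vector_derivative[where n = i and c = "\<lambda>j. D (k + j) 0"]]
    show ?thesis unfolding g_def g'_def by simp
  qed
  moreover have "g 0 = 0"
    by (simp add: g_def lessThan_Suc_eq_insert_0 zero_power sum.reindex)
  moreover have "norm (g' x) \<le> M * \<rho> ^ i" if "x \<in> {0<..<\<rho>}" for x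
  proof -
    have "norm (g' x) \<le> M * x ^ i"
      using Suc.hyps(1)[of "Suc k" x] k Suc.prems that unfolding g'_def by auto
    also have "\<dots> \<le> M * \<rho> ^ i"
      using that \<open>M \<ge> 0\<close> by (intro mult_left_mono power_mono) auto
    finally show ?thesis .
  qed
  ultimately have "norm (g \<rho>) \<le> \<rho> * (M * \<rho> ^ i)"
    using Suc.prems by (intro norm_le_by_derivative_bound[where \<delta> = \<delta>]) auto
  then show ?case
    unfolding Suc.hyps(2)[symmetric] by (simp add: g_def mult.left_commute)
qed

section \<open>The Taylor mass of the first derivative\<close>

text \<open>The \<open>\<ell>\<^sup>1\<close>-norm of the coefficients of the degree-\<open>n\<close> Taylor polynomial of \<open>D 1\<close> at \<open>0\<close>,
  rescaled to the interval \<open>[0, \<rho>]\<close>.\<close>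
definition taylor_mass :: "nat \<Rightarrow> (nat \<Rightarrow> real \<Rightarrow> complex) \<Rightarrow> real \<Rightarrow> real" where
  "taylor_mass n D \<rho> = (\<Sum>i\<le>n. norm (D (Suc i) 0) / fact i * \<rho> ^ i)"

lemma taylor_mass_lower_bound:
  fixes D :: "nat \<Rightarrow> real \<Rightarrow> complex"
  assumes C0: "C0 \<le> (\<Sum>j=2..Suc n. norm (D j 0 / of_real (fact j)))"
    and "0 < \<rho>" and "\<rho> \<le> 1"
  shows "C0 * \<rho> ^ n \<le> taylor_mass n D \<rho>"
proof -
  have "(\<Sum>j=2..Suc n. norm (D j 0 / of_real (fact j)))
      = (\<Sum>i=1..n. norm (D (Suc i) 0) / fact (Suc i))"
    unfolding numeral_2_eq_2 One_nat_def sum.shift_bounds_cl_Suc_ivl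
    by (simp add: norm_divide del: of_real_fact fact_Suc)
  also have "\<dots> \<le> (\<Sum>i=1..n. norm (D (Suc i) 0) / fact i)"
    by (intro sum_mono divide_left_mono fact_mono) auto
  also have "\<dots> \<le> (\<Sum>i\<le>n. norm (D (Suc i) 0) / fact i)"
    by (intro sum_mono2) auto
  finally have "C0 * \<rho> ^ n \<le> (\<Sum>i\<le>n. norm (D (Suc i) 0) / fact i) * \<rho> ^ n"
    using C0 \<open>0 < \<rho>\<close> by (intro mult_right_mono) auto
  also have "\<dots> = (\<Sum>i\<le>n. norm (D (Suc i) 0) / fact i * \<rho> ^ n)"
    by (rule sum_distrib_right)
  also have "\<dots> \<le> taylor_mass n D \<rho>"
    unfolding taylor_mass_def using assms(2,3)
    by (intro sum_mono mult_left_mono power_decreasing) auto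
  finally show ?thesis .
qed

text \<open>The rescaled Taylor polynomial of \<open>D 1\<close> takes at the node \<open>l\<close> the value of the Taylor
  polynomial at \<open>t = \<rho> * (l + 1) / (n + 1) \<le> \<rho>\<close>, which is close to \<open>D 1 t\<close>; monotonicity (F3) of
  \<open>|D 1|\<close> and the interpolation estimate then bound the Taylor mass from above.\<close>
lemma taylor_mass_upper_bound:
  fixes D :: "nat \<Rightarrow> real \<Rightarrow> complex"
  assumes interpolation: "\<And>c B. \<forall>l\<le>n. norm (\<Sum>i\<le>n. c i * interpolation_node n l ^ i) \<le> B
      \<Longrightarrow> (\<Sum>i\<le>n. norm (c i)) \<le> A * B"
    and "M \<ge> 0"
    and rem: "\<And>t. t \<in> {0<..<\<delta>} \<Longrightarrow>
       norm (D 1 t - (\<Sum>j<Suc n. (t ^ j / fact j) *\<^sub>R D (Suc j) 0)) \<le> M * t ^ Suc n"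
    and mono: "mono_on {0<..<\<delta>} (\<lambda>t. norm (D 1 t))"
    and \<rho>: "\<rho> \<in> {0<..<\<delta>}"
  shows "taylor_mass n D \<rho> \<le> A * (norm (D 1 \<rho>) + M * \<rho> ^ Suc n)"
proof -
  define c where "c i = D (Suc i) 0 / of_real (fact i) * of_real (\<rho> ^ i)" for i
  have "taylor_mass n D \<rho> = (\<Sum>i\<le>n. norm (c i))"
    using \<rho> by (simp add: taylor_mass_def c_def norm_mult norm_divide norm_power)
  also have "\<dots> \<le> A * (norm (D 1 \<rho>) + M * \<rho> ^ Suc n)"
  proof (intro interpolation allI impI)
    fix l assume "l \<le> n"
    define t where "t = \<rho> * (real (Suc l) / real (Suc n))"
    have "0 < real (Suc l) / real (Suc n)" "real (Suc l) / real (Suc n) \<le> 1"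
      using \<open>l \<le> n\<close> by auto
    then have "0 < t" "t \<le> \<rho>"
      using \<rho> mult_left_le[of "real (Suc l) / real (Suc n)" \<rho>] unfolding t_def by auto
    then have t: "t \<in> {0<..<\<delta>}" "t \<le> \<rho>" using \<rho> by auto
    have node_value: "(\<Sum>i\<le>n. c i * interpolation_node n l ^ i)
        = (\<Sum>j<Suc n. (t ^ j / fact j) *\<^sub>R D (Suc j) 0)" (is "_ = ?T")
      by (auto simp: c_def interpolation_node_def t_def lessThan_Suc_atMost scaleR_conv_of_real
          power_mult_distrib[symmetric] times_divide_eq_right intro!: sum.cong)
    have "norm ?T \<le> norm (D 1 t) + M * t ^ Suc n"
      using rem[OF t(1)] norm_triangle_sub[of ?T "D 1 t"] by (simp only: norm_minus_commute)
    also have "\<dots> \<le> norm (D 1 \<rho>) + M * \<rho> ^ Suc n"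
      using mono_onD[OF mono t(1) \<rho> t(2)] t \<open>M \<ge> 0\<close>
      by (intro add_mono mult_left_mono power_mono) auto
    finally show "norm (\<Sum>i\<le>n. c i * interpolation_node n l ^ i) \<le> norm (D 1 \<rho>) + M * \<rho> ^ Suc n"
      by (simp only: node_value)
  qed
  finally show ?thesis .
qed

text \<open>The Taylor expansion of \<open>D m\<close>, rescaled by \<open>\<rho> ^ (m - 1)\<close>, is controlled by the Taylor
  mass (its coefficients are among those of \<open>D 1\<close>) plus the remainder.\<close>
lemma higher_derivative_le_taylor_mass:
  fixes D :: "nat \<Rightarrow> real \<Rightarrow> complex"
  assumes rem: "norm (D m \<rho> - (\<Sum>j<Suc (Suc n) - m. (\<rho> ^ j / fact j) *\<^sub>R D (m + j) 0))
      \<le> M * \<rho> ^ (Suc (Suc n) - m)"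
    and m: "1 \<le> m" "m \<le> Suc (Suc n)" and "0 < \<rho>"
  shows "\<rho> ^ (m - 1) * norm (D m \<rho>) \<le> fact (Suc n) * taylor_mass n D \<rho> + M * \<rho> ^ Suc n"
proof -
  let ?T = "\<Sum>j<Suc (Suc n) - m. (\<rho> ^ j / fact j) *\<^sub>R D (m + j) 0"
  define h where "h i = fact (Suc n) * (norm (D (Suc i) 0) / fact i * \<rho> ^ i)" for i
  have "norm ?T \<le> (\<Sum>j<Suc (Suc n) - m. \<rho> ^ j / fact j * norm (D (m + j) 0))"
    by (rule order.trans[OF norm_sum]) (use \<open>0 < \<rho>\<close> in simp)
  then have "\<rho> ^ (m - 1) * norm ?T
      \<le> \<rho> ^ (m - 1) * (\<Sum>j<Suc (Suc n) - m. \<rho> ^ j / fact j * norm (D (m + j) 0))"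
    using \<open>0 < \<rho>\<close> by (intro mult_left_mono) auto
  also have "\<dots> = (\<Sum>j<Suc (Suc n) - m. \<rho> ^ (m - 1) * (\<rho> ^ j / fact j * norm (D (m + j) 0)))"
    by (rule sum_distrib_left)
  also have "\<dots> \<le> (\<Sum>j<Suc (Suc n) - m. h (m - 1 + j))"
  proof (intro sum_mono)
    fix j assume j: "j \<in> {..<Suc (Suc n) - m}"
    define i where "i = m - 1 + j"
    have i: "m + j = Suc i" "i \<le> n" "\<rho> ^ (m - 1) * \<rho> ^ j = \<rho> ^ i"
      using m j by (auto simp: i_def power_add[symmetric])
    have "fact i / fact j \<le> (fact i :: real)"
      using fact_ge_1[of j, where 'a = real] by (simp add: divide_le_eq)
    also have "\<dots> \<le> fact (Suc n)" using i(2) by (intro fact_mono) auto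
    finally have "norm (D (Suc i) 0) / fact i * \<rho> ^ i * (fact i / fact j)
        \<le> norm (D (Suc i) 0) / fact i * \<rho> ^ i * fact (Suc n)"
      using \<open>0 < \<rho>\<close> by (intro mult_left_mono) auto
    then show "\<rho> ^ (m - 1) * (\<rho> ^ j / fact j * norm (D (m + j) 0)) \<le> h (m - 1 + j)"
      unfolding h_def i_def[symmetric] i(1) by (simp add: i(3)[symmetric] field_simps)
  qed
  also have "\<dots> = sum h ((\<lambda>j. m - 1 + j) ` {..<Suc (Suc n) - m})"
    by (simp add: sum.reindex)
  also have "\<dots> \<le> sum h {..n}"
    using m \<open>0 < \<rho>\<close> by (intro sum_mono2) (auto simp: h_def)
  also have "\<dots> = fact (Suc n) * taylor_mass n D \<rho>"
    by (simp add: h_def taylor_mass_def sum_distrib_left)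
  finally have T_bound: "\<rho> ^ (m - 1) * norm ?T \<le> fact (Suc n) * taylor_mass n D \<rho>" .
  have "norm (D m \<rho>) \<le> norm ?T + M * \<rho> ^ (Suc (Suc n) - m)"
    using rem norm_triangle_sub[of "D m \<rho>" ?T] by simp
  then have "\<rho> ^ (m - 1) * norm (D m \<rho>)
      \<le> \<rho> ^ (m - 1) * norm ?T + M * (\<rho> ^ (m - 1) * \<rho> ^ (Suc (Suc n) - m))"
    using mult_left_mono[OF _ zero_le_power[of \<rho> "m - 1"]] \<open>0 < \<rho>\<close>
    by (fastforce simp: distrib_left mult.left_commute)
  also have "\<rho> ^ (m - 1) * \<rho> ^ (Suc (Suc n) - m) = \<rho> ^ Suc n"
    using m by (simp add: power_add[symmetric])
  finally show ?thesis using T_bound by simp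
qed

text \<open>Setting: \<open>D\<close> is the derivative family of a \<open>C\<^sup>n\<^sup>+\<^sup>2\<close> function on \<open>[0, \<delta>)\<close> satisfying
  (F2)--(F4) with \<open>\<gamma> = n + 1\<close>, \<open>A\<close> is an interpolation constant for the nodes, and \<open>\<delta>\<close> is small
  relative to \<open>C0\<close>, \<open>A\<close> and \<open>M\<close>.\<close>
context
  fixes n :: nat and A \<delta> C0 M :: real and f :: "real \<Rightarrow> complex" and D :: "nat \<Rightarrow> real \<Rightarrow> complex"
  assumes interpolation: "\<And>c B. \<forall>l\<le>n. norm (\<Sum>i\<le>n. c i * interpolation_node n l ^ i) \<le> B
      \<Longrightarrow> (\<Sum>i\<le>n. norm (c i)) \<le> A * B"
    and A_pos: "A > 0"
    and small: "\<delta> \<le> 1" "2 * A * (\<bar>M\<bar> + 1) * \<delta> \<le> C0"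
    and C: "C_derivs (Suc (Suc n)) f D {0..<\<delta>}"
    and jet: "C0 \<le> (\<Sum>j=2..Suc n. norm (D j 0 / of_real (fact j)))"
    and mono: "mono_on {0<..<\<delta>} (\<lambda>t. norm (D 1 t))"
    and bnd: "\<And>k t. k \<le> Suc (Suc n) \<Longrightarrow> t \<in> {0<..<\<delta>} \<Longrightarrow> norm (D k t) \<le> M"
begin

lemma derivative_bound_nonneg: "t \<in> {0<..<\<delta>} \<Longrightarrow> M \<ge> 0"
  using bnd[of 1 t] norm_ge_zero[of "D 1 t"] by linarith

lemma taylor_remainder:
  assumes "k \<le> Suc (Suc n)" and "t \<in> {0<..<\<delta>}"
  shows "norm (D k t - (\<Sum>j<Suc (Suc n) - k. (t ^ j / fact j) *\<^sub>R D (k + j) 0))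
      \<le> M * t ^ (Suc (Suc n) - k)"
  using taylor_remainder_bound[OF C _ derivative_bound_nonneg[OF assms(2)] assms] bnd by blast

lemma taylor_mass_le_first_derivative:
  assumes "\<rho> \<in> {0<..<\<delta>}"
  shows "taylor_mass n D \<rho> \<le> A * (norm (D 1 \<rho>) + M * \<rho> ^ Suc n)"
  using taylor_remainder[of 1] interpolation derivative_bound_nonneg mono assms
  by (intro taylor_mass_upper_bound[where \<delta> = \<delta>]) auto

text \<open>The lower bound (the remainder is absorbed thanks to the smallness of \<open>\<delta>\<close>); as a
  by-product the remainder itself is dominated by \<open>|D 1 \<rho>|\<close>.\<close>
lemma first_derivative_lower_bound:
  assumes \<rho>: "\<rho> \<in> {0<..<\<delta>}"
  shows "C0 / 2 * \<rho> ^ n \<le> A * norm (D 1 \<rho>)" and "M * \<rho> ^ Suc n \<le> norm (D 1 \<rho>)"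
proof -
  have "M \<ge> 0" using derivative_bound_nonneg[OF \<rho>] .
  have "0 < \<rho>" "\<rho> \<le> 1" using \<rho> small(1) by auto
  note upper = taylor_mass_le_first_derivative[OF \<rho>]
  have lower: "C0 * \<rho> ^ n \<le> taylor_mass n D \<rho>"
    using jet \<open>0 < \<rho>\<close> \<open>\<rho> \<le> 1\<close> by (rule taylor_mass_lower_bound)
  have "A * M * \<rho> \<le> A * (\<bar>M\<bar> + 1) * \<delta>"
    using A_pos \<open>M \<ge> 0\<close> \<rho> by (intro mult_mono mult_left_mono) auto
  then have "A * M * \<rho> \<le> C0 / 2" using small(2) by linarith
  then have absorb: "A * (M * \<rho> ^ Suc n) \<le> C0 / 2 * \<rho> ^ n"
    using \<open>0 < \<rho>\<close> mult_right_mono[of "A * M * \<rho>" "C0 / 2" "\<rho> ^ n"] by (simp add: mult_ac)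
  show lower_bound: "C0 / 2 * \<rho> ^ n \<le> A * norm (D 1 \<rho>)"
    using upper lower absorb by (simp add: algebra_simps)
  have "A * (M * \<rho> ^ Suc n) \<le> A * norm (D 1 \<rho>)" using lower_bound absorb by linarith
  then show "M * \<rho> ^ Suc n \<le> norm (D 1 \<rho>)"
    using A_pos by (simp only: mult_le_cancel_left_pos)
qed

text \<open>Each \<open>D m\<close> is bounded by \<open>\<rho> ^ (1 - m)\<close> times \<open>|D 1 \<rho>|\<close>: its rescaled size is at most
  the Taylor mass plus the remainder, both dominated by \<open>|D 1 \<rho>|\<close>.\<close>
lemma higher_derivative_bound:
  assumes \<rho>: "\<rho> \<in> {0<..<\<delta>}" and m: "1 \<le> m" "m \<le> Suc (Suc n)"
  shows "norm (D m \<rho>) \<le> (2 * fact (Suc n) * A + 1) * \<rho> powr (1 - real m) * norm (D 1 \<rho>)"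
proof -
  have "0 < \<rho>" using \<rho> by simp
  note rem_le = first_derivative_lower_bound(2)[OF \<rho>]
  have "taylor_mass n D \<rho> \<le> A * (norm (D 1 \<rho>) + M * \<rho> ^ Suc n)"
    using taylor_mass_le_first_derivative[OF \<rho>] .
  also have "\<dots> \<le> A * (norm (D 1 \<rho>) + norm (D 1 \<rho>))"
    using rem_le A_pos by (intro mult_left_mono add_left_mono) auto
  finally have "fact (Suc n) * taylor_mass n D \<rho> + M * \<rho> ^ Suc n
      \<le> fact (Suc n) * (A * (norm (D 1 \<rho>) + norm (D 1 \<rho>))) + norm (D 1 \<rho>)"
    using rem_le by (intro add_mono mult_left_mono) auto
  also have "\<dots> = (2 * fact (Suc n) * A + 1) * norm (D 1 \<rho>)"
    by (simp add: algebra_simps)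
  finally have scaled: "\<rho> ^ (m - 1) * norm (D m \<rho>) \<le> (2 * fact (Suc n) * A + 1) * norm (D 1 \<rho>)"
    using higher_derivative_le_taylor_mass[OF taylor_remainder[OF m(2) \<rho>] m \<open>0 < \<rho>\<close>]
    by linarith
  have "\<rho> powr (1 - real m) = inverse (\<rho> powr real (m - 1))"
    using m by (simp add: powr_minus[symmetric] of_nat_diff)
  then have powr_eq: "\<rho> powr (1 - real m) = inverse (\<rho> ^ (m - 1))"
    using \<open>0 < \<rho>\<close> by (simp add: powr_realpow)
  have "norm (D m \<rho>) = inverse (\<rho> ^ (m - 1)) * (\<rho> ^ (m - 1) * norm (D m \<rho>))"
    using \<open>0 < \<rho>\<close> by simp
  also have "\<dots> \<le> inverse (\<rho> ^ (m - 1)) * ((2 * fact (Suc n) * A + 1) * norm (D 1 \<rho>))"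
    using scaled \<open>0 < \<rho>\<close> by (intro mult_left_mono) auto
  finally show ?thesis
    by (simp add: powr_eq mult_ac)
qed

end

text \<open>The constants produced above depend only on \<open>n\<close>, \<open>A\<close> and \<open>C0\<close>, so the single-function
  estimates hold uniformly in the parameter \<open>\<mu>\<close>.\<close>
lemma uniform_derivative_estimates:
  fixes F :: "real \<Rightarrow> 'm \<Rightarrow> complex" and D :: "nat \<Rightarrow> real \<Rightarrow> 'm \<Rightarrow> complex"
  assumes interpolation: "\<And>c B. \<forall>l\<le>n. norm (\<Sum>i\<le>n. c i * interpolation_node n l ^ i) \<le> B
      \<Longrightarrow> (\<Sum>i\<le>n. norm (c i)) \<le> A * B"
    and "A > 0" and "C0 > 0" and small: "\<delta> \<le> 1" "2 * A * (\<bar>M\<bar> + 1) * \<delta> \<le> C0"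
    and C: "\<forall>\<mu>. C_derivs (Suc (Suc n)) (\<lambda>\<rho>. F \<rho> \<mu>) (\<lambda>k \<rho>. D k \<rho> \<mu>) {0..<\<delta>}"
    and jet: "\<forall>\<mu>. (\<Sum>j=2..Suc n. norm (D j 0 \<mu> / of_real (fact j))) \<ge> C0"
    and mono: "\<forall>\<mu>. mono_on {0<..<\<delta>} (\<lambda>\<rho>. norm (D 1 \<rho> \<mu>))"
    and bnd: "\<forall>k\<le>Suc (Suc n). \<forall>\<rho>\<in>{0<..<\<delta>}. \<forall>\<mu>. norm (D k \<rho> \<mu>) \<le> M"
  shows "\<exists>C>0. \<exists>Cm :: nat \<Rightarrow> real. (\<forall>m. Cm m > 0) \<and>
           (\<forall>\<rho>\<in>{0<..<\<delta>}. \<forall>\<mu>.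
              norm (D 1 \<rho> \<mu>) \<ge> C * \<rho> ^ n \<and>
              (\<forall>m. 1 \<le> m \<and> m \<le> Suc (Suc n) \<longrightarrow>
                 norm (D m \<rho> \<mu>) \<le> Cm m * \<rho> powr (1 - real m) * norm (D 1 \<rho> \<mu>)))"
proof (intro exI[of _ "C0 / (2 * A)"] exI[of _ "\<lambda>_. 2 * fact (Suc n) * A + 1"] conjI allI ballI impI)
  show "C0 / (2 * A) > 0" "\<And>m. 2 * fact (Suc n) * A + 1 > 0"
    using \<open>A > 0\<close> \<open>C0 > 0\<close> by (auto intro: add_pos_nonneg)
  fix \<rho> \<mu> m assume \<rho>: "\<rho> \<in> {0<..<\<delta>}"
  note single = interpolation \<open>A > 0\<close> small C[rule_format] jet[rule_format] mono[rule_format]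
  have "C0 / 2 * \<rho> ^ n \<le> A * norm (D 1 \<rho> \<mu>)"
    using first_derivative_lower_bound(1)[OF single _ \<rho>] bnd by blast
  then show "C0 / (2 * A) * \<rho> ^ n \<le> norm (D 1 \<rho> \<mu>)"
    using \<open>A > 0\<close> by (simp add: field_simps)
  show "norm (D m \<rho> \<mu>) \<le> (2 * fact (Suc n) * A + 1) * \<rho> powr (1 - real m) * norm (D 1 \<rho> \<mu>)"
    if "1 \<le> m \<and> m \<le> Suc (Suc n)"
    using higher_derivative_bound[OF single _ \<rho>] bnd that by blast
qed

theorem mainTheorem2:
  fixes \<gamma> :: nat and C0 M :: real
  assumes "\<gamma> \<ge> 2" and "C0 > 0"
  shows "\<exists>\<delta>0>0. \<forall>\<delta> (F :: real \<Rightarrow> 'm \<Rightarrow> complex) (D :: nat \<Rightarrow> real \<Rightarrow> 'm \<Rightarrow> complex).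
     0 < \<delta> \<and> \<delta> \<le> \<delta>0
     \<and> (\<forall>\<mu>. C_derivs (\<gamma> + 1) (\<lambda>\<rho>. F \<rho> \<mu>) (\<lambda>k \<rho>. D k \<rho> \<mu>) {0..<\<delta>})
     \<and> (\<forall>\<mu>. D 0 0 \<mu> = 0 \<and> D 1 0 \<mu> = 0)
     \<and> (\<forall>\<mu>. (\<Sum>j=2..\<gamma>. norm (D j 0 \<mu> / of_real (fact j))) \<ge> C0)
     \<and> (\<forall>\<mu>. mono_on {0<..<\<delta>} (\<lambda>\<rho>. norm (D 1 \<rho> \<mu>)))
     \<and> (\<forall>k\<le>\<gamma>+1. \<forall>\<rho>\<in>{0<..<\<delta>}. \<forall>\<mu>. norm (D k \<rho> \<mu>) \<le> M)
     \<longrightarrow> (\<exists>C>0. \<exists>Cm :: nat \<Rightarrow> real. (\<forall>m. Cm m > 0) \<and>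
           (\<forall>\<rho>\<in>{0<..<\<delta>}. \<forall>\<mu>.
              norm (D 1 \<rho> \<mu>) \<ge> C * \<rho> ^ (\<gamma> - 1) \<and>
              (\<forall>m. 1 \<le> m \<and> m \<le> \<gamma> + 1 \<longrightarrow>
                 norm (D m \<rho> \<mu>) \<le> Cm m * \<rho> powr (1 - real m) * norm (D 1 \<rho> \<mu>))))"
proof -
  obtain n where \<gamma>: "\<gamma> = Suc n" using assms(1) by (cases \<gamma>) auto
  obtain A where A: "A > 0" "\<And>c B. \<forall>l\<le>n. norm (\<Sum>i\<le>n. c i * interpolation_node n l ^ i) \<le> B
      \<Longrightarrow> (\<Sum>i\<le>n. norm (c i)) \<le> A * B"
    using coefficients_bounded_by_node_values[OF inj_on_interpolation_node] by blast
  define \<delta>0 where "\<delta>0 = min 1 (C0 / (2 * A * (\<bar>M\<bar> + 1)))"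
  have "\<delta>0 > 0" using A(1) assms(2) by (simp add: \<delta>0_def)
  moreover have "\<delta> \<le> 1 \<and> 2 * A * (\<bar>M\<bar> + 1) * \<delta> \<le> C0" if "\<delta> \<le> \<delta>0" for \<delta>
    using that A(1) by (simp add: \<delta>0_def pos_le_divide_eq mult.commute)
  ultimately show ?thesis
    unfolding \<gamma> diff_Suc_1 Suc_eq_plus1[symmetric]
    using uniform_derivative_estimates[OF A(2) A(1) assms(2)]
    by (intro exI[of _ \<delta>0]) blast
qed

end
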